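(* Let $H_X\in\mathbb{F}_2^{m_X\times n}$ and $H_Z\in\mathbb{F}_2^{m_Z\times n}$ be the parity-check matrices of a CSS code, with $H_XH_Z^\top=0$ over $\mathbb{F}_2$. Fix an erased set $\mathcal{E}\subseteq\{1,\dots,n\}$ and let $\mathcal{K}=\mathcal{E}^c$ be the set of known qubits. First run dual peeling on $(H_X,\mathcal{K})$ to exhaustion, i.e. until neither dual-peeling rule applies. Then run any amount of primal peeling on the system $H_{Z,\mathcal{E}}x_{\mathcal{E}}=s_x$, which solves some erased coordinates and moves them from $\mathcal{E}$ into $\mathcal{K}$. Then re-running dual-peeling Rule 2 on the resulting matrix with respect to the enlarged known set cannot produce a new fully erased $X$-stabilizer, i.e. a new row $i$ with $d_{\mathcal{K}}(i)=0$.
   Context: Setting: a CSS code on $n$ qubits. On the quantum erasure channel, the qubits in $\mathcal{E}$ are erased and the decoder knows $\mathcal{E}$. To decode $X$ errors one solves $H_{Z,\mathcal{E}}x_{\mathcal{E}}=s_x$, where $s_x$ is the measured syndrome and $H_{Z,\mathcal{E}}$ is the submatrix of $H_Z$ formed by the columns in $\mathcal{E}$. For a row $i$ of (the current, row-reduced) $H_X$, its known-degree is $d_{\mathcal{K}}(i)=\mathrm{wt}(H_{X,i,\mathcal{K}})$, the number of $1$s of row $i$ in the columns indexed by $\mathcal{K}$. Dual peeling modifies $H_X$ by repeatedly applying two rules until neither applies: Rule 1 (known-column weight-2 elimination): if some $j\in\mathcal{K}$ has column weight exactly $2$ in $H_{X,\mathcal{K}}$, with ones in rows $i_1,i_2$,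 delete row $i_2$ and replace row $i_1$ by $H_{X,i_1}\oplus H_{X,i_2}$. Rule 2 (row peeling): if some row $i$ has $d_{\mathcal{K}}(i)=1$, with unique known neighbor $j$, then for every other row $k\neq i$ with $H_{X,kj}=1$, set $H_{X,k}\leftarrow H_{X,k}\oplus H_{X,i}$. A row with $d_{\mathcal{K}}(i)=0$ is a fully erased $X$-stabilizer: its support lies entirely in $\mathcal{E}$. Primal peeling: while some row of $H_{Z}$, restricted to the still-unresolved erased coordinates, has weight one, solve that coordinate from the syndrome equation, mark it known, and substitute its value into the other equations. *)

theory Defs
  imports Main
begin

text \<open>Binary matrices over F_2 are represented as lists of rows; a row is the set
  of column indices (in 0..<n) where it has a 1. Addition of rows over F_2
  is symmetric difference.\<close>

definition row_xor :: "nat set \<Rightarrow> nat set \<Rightarrow> nat set" where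
  "row_xor a b = (a - b) \<union> (b - a)"

definition known_deg :: "nat set \<Rightarrow> nat set \<Rightarrow> nat" where
  "known_deg K r = card (r \<inter> K)"

definition remove_nth :: "nat \<Rightarrow> 'a list \<Rightarrow> 'a list" where
  "remove_nth i xs = take i xs @ drop (Suc i) xs"

definition dual_rule1 :: "nat set \<Rightarrow> nat set list \<Rightarrow> nat set list \<Rightarrow> bool" where
  "dual_rule1 K M M' \<longleftrightarrow>
     (\<exists>j i1 i2. j \<in> K \<and> i1 < length M \<and> i2 < length M \<and> i1 \<noteq> i2 \<and>
        {i. i < length M \<and> j \<in> M ! i} = {i1, i2} \<and>
        M' = remove_nth i2 (M[i1 := row_xor (M ! i1) (M ! i2)]))"

definition dual_rule2 :: "nat set \<Rightarrow> nat set list \<Rightarrow> nat set list \<Rightarrow> bool" where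
  "dual_rule2 K M M' \<longleftrightarrow>
     (\<exists>i j. i < length M \<and> M ! i \<inter> K = {j} \<and>
        M' = map (\<lambda>k. if k \<noteq> i \<and> j \<in> M ! k then row_xor (M ! k) (M ! i) else M ! k)
                 [0..<length M])"

definition dual_step :: "nat set \<Rightarrow> nat set list \<Rightarrow> nat set list \<Rightarrow> bool" where
  "dual_step K M M' \<longleftrightarrow> dual_rule1 K M M' \<or> dual_rule2 K M M'"

text \<open>One primal peeling step on the erased set E: some row of H_Z restricted to
  the still-unresolved erased coordinates has weight one; that coordinate is
  solved and becomes known.\<close>
definition primal_step :: "nat set list \<Rightarrow> nat set \<Rightarrow> nat set \<Rightarrow> bool" where
  "primal_step HZ E E' \<longleftrightarrow> (\<exists>r j. r \<in> set HZ \<and> r \<inter> E = {j} \<and> E' = E - {j})"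

end

theory Submission
  imports Defs
begin

text \<open>Every row produced by dual peeling is a sum of rows of \<open>H\<^sub>X\<close>, hence an
  \<open>X\<close>-stabilizer with even overlap with every row of \<open>H\<^sub>Z\<close>. Primal peeling never
  resolves a coordinate of a fully erased stabilizer: a \<open>Z\<close>-check meeting the erased
  set in a single coordinate of that row would overlap it oddly. Since primal peeling
  only enlarges the known set, a row of known-degree one afterwards had known-degree
  at most one before; exhaustion of dual peeling rules out one, so it was fully erased,
  and then it is still fully erased. Hence Rule 2 does not apply at all after primal
  peeling, and re-running it changes nothing.\<close>

lemma even_card_sym_diff_iff:
  assumes "finite A" "finite B"
  shows "even (card (sym_diff A B)) \<longleftrightarrow> even (card A + card B)"
proof -
  have "card (sym_diff A B \<union> (A \<inter> B)) = card (sym_diff A B) + card (A \<inter> B)"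
    by (rule card_Un_disjoint) (use assms in auto)
  moreover have "sym_diff A B \<union> (A \<inter> B) = A \<union> B" by blast
  ultimately have "card (A \<union> B) = card (sym_diff A B) + card (A \<inter> B)" by simp
  with card_Un_Int[OF assms]
  have "card A + card B = card (sym_diff A B) + 2 * card (A \<inter> B)" by linarith
  then show ?thesis by (metis even_add even_mult_iff even_numeral)
qed

definition orthogonal_rows :: "nat \<Rightarrow> nat set list \<Rightarrow> nat set set" where
  "orthogonal_rows n HZ = {r. r \<subseteq> {..<n} \<and> (\<forall>b \<in> set HZ. even (card (r \<inter> b)))}"

lemma row_xor_orthogonal_rows:
  assumes a: "a \<in> orthogonal_rows n HZ" and c: "c \<in> orthogonal_rows n HZ"
  shows "row_xor a c \<in> orthogonal_rows n HZ"
  unfolding orthogonal_rows_def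
proof (intro CollectI conjI ballI)
  show "row_xor a c \<subseteq> {..<n}" using a c by (auto simp: orthogonal_rows_def row_xor_def)
next
  fix b assume b: "b \<in> set HZ"
  have fin: "finite (a \<inter> b)" "finite (c \<inter> b)"
    using a c by (auto simp: orthogonal_rows_def intro: finite_subset)
  have "row_xor a c \<inter> b = sym_diff (a \<inter> b) (c \<inter> b)" by (auto simp: row_xor_def)
  then show "even (card (row_xor a c \<inter> b))"
    using a c b by (simp add: even_card_sym_diff_iff[OF fin] orthogonal_rows_def)
qed

lemma set_remove_nth_subset: "set (remove_nth i xs) \<subseteq> set xs"
  unfolding remove_nth_def by (auto dest: in_set_takeD in_set_dropD)

lemma dual_step_preserves_rows:
  assumes xor_closed: "\<And>a c. a \<in> P \<Longrightarrow> c \<in> P \<Longrightarrow> row_xor a c \<in> P"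
    and step: "dual_step K M M'" and rows: "set M \<subseteq> P"
  shows "set M' \<subseteq> P"
  using step unfolding dual_step_def
proof
  assume "dual_rule1 K M M'"
  then obtain i1 i2 where i: "i1 < length M" "i2 < length M"
    and M': "M' = remove_nth i2 (M[i1 := row_xor (M ! i1) (M ! i2)])"
    unfolding dual_rule1_def by blast
  have "set M' \<subseteq> insert (row_xor (M ! i1) (M ! i2)) (set M)"
    unfolding M' using set_remove_nth_subset set_update_subset_insert by (rule order_trans)
  moreover have "row_xor (M ! i1) (M ! i2) \<in> P"
    using i rows by (intro xor_closed) (auto dest: nth_mem)
  ultimately show ?thesis using rows by blast
next
  assume "dual_rule2 K M M'"
  then obtain i j where i: "i < length M"
    and M': "M' = map (\<lambda>k. if k \<noteq> i \<and> j \<in> M ! k then row_xor (M ! k) (M ! i) else M ! k)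
                  [0..<length M]"
    unfolding dual_rule2_def by blast
  have row: "M ! k \<in> P" if "k < length M" for k
    using rows nth_mem[OF that] by blast
  show ?thesis unfolding M' using row[OF i] by (auto intro!: row xor_closed)
qed

lemma dual_steps_preserve_rows:
  assumes xor_closed: "\<And>a c. a \<in> P \<Longrightarrow> c \<in> P \<Longrightarrow> row_xor a c \<in> P"
    and steps: "(dual_step K)\<^sup>*\<^sup>* M M'" and rows: "set M \<subseteq> P"
  shows "set M' \<subseteq> P"
  using steps rows by induction (use dual_step_preserves_rows[OF xor_closed] in blast)+

lemma primal_steps_subset:
  "(primal_step HZ)\<^sup>*\<^sup>* E E' \<Longrightarrow> E' \<subseteq> E"
  by (induction rule: rtranclp_induct) (auto simp: primal_step_def)

lemma primal_steps_keep_erased_orthogonal_row: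
  assumes "(primal_step HZ)\<^sup>*\<^sup>* E E'" and "r \<subseteq> E"
    and even: "\<forall>b \<in> set HZ. even (card (r \<inter> b))"
  shows "r \<subseteq> E'"
  using assms(1,2)
proof (induction rule: rtranclp_induct)
  case base
  then show ?case .
next
  case (step E1 E2)
  then have r: "r \<subseteq> E1" by simp
  from step.hyps(2) obtain b j where b: "b \<in> set HZ" "b \<inter> E1 = {j}" and E2: "E2 = E1 - {j}"
    unfolding primal_step_def by blast
  have "j \<notin> r"
  proof
    assume "j \<in> r"
    with r b(2) have "r \<inter> b = {j}" by auto
    with even b(1) show False by force
  qed
  with r E2 show ?case by blast
qed

lemma dual_rule2_enabled_iff:
  "(\<exists>M'. dual_rule2 K M M') \<longleftrightarrow> (\<exists>i < length M. \<exists>j. M ! i \<inter> K = {j})"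
  by (auto simp: dual_rule2_def)

lemma dual_rule2_disabled_after_primal_steps:
  assumes rows: "set M \<subseteq> orthogonal_rows n HZ"
    and disabled: "\<not> (\<exists>M'. dual_rule2 ({..<n} - E) M M')"
    and primal: "(primal_step HZ)\<^sup>*\<^sup>* E E'"
  shows "\<not> (\<exists>M'. dual_rule2 ({..<n} - E') M M')"
proof
  assume "\<exists>M'. dual_rule2 ({..<n} - E') M M'"
  then obtain i j where i: "i < length M" and deg1: "M ! i \<inter> ({..<n} - E') = {j}"
    by (auto simp: dual_rule2_enabled_iff)
  have r: "M ! i \<subseteq> {..<n}" "\<forall>b \<in> set HZ. even (card (M ! i \<inter> b))"
    using rows nth_mem[OF i] by (auto simp: orthogonal_rows_def)
  have "M ! i \<inter> ({..<n} - E) \<subseteq> {j}"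
    using deg1 primal_steps_subset[OF primal] by blast
  moreover have "M ! i \<inter> ({..<n} - E) \<noteq> {j}"
    using disabled i by (auto simp: dual_rule2_enabled_iff)
  ultimately have "M ! i \<subseteq> E" using r(1) by blast
  then have "M ! i \<subseteq> E'"
    using primal_steps_keep_erased_orthogonal_row[OF primal _ r(2)] by blast
  with deg1 show False by blast
qed

lemma rtranclp_from_irreducible:
  "\<not> (\<exists>y. R x y) \<Longrightarrow> R\<^sup>*\<^sup>* x z \<Longrightarrow> z = x"
  by (auto elim: converse_rtranclpE)

theorem lemma1:
  fixes n :: nat and HX HZ :: "nat set list" and E E' :: "nat set" and M :: "nat set list"
  assumes HX_rows: "\<forall>r \<in> set HX. r \<subseteq> {..<n}"
    and HZ_rows: "\<forall>r \<in> set HZ. r \<subseteq> {..<n}"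
    and CSS: "\<forall>a \<in> set HX. \<forall>b \<in> set HZ. even (card (a \<inter> b))"
    and E_sub: "E \<subseteq> {..<n}"
    and dual_run: "(dual_step ({..<n} - E))\<^sup>*\<^sup>* HX M"
    and dual_exhausted: "\<not> (\<exists>M'. dual_step ({..<n} - E) M M')"
    and primal_run: "(primal_step HZ)\<^sup>*\<^sup>* E E'"
  shows "(\<forall>M2 M3. (dual_rule2 ({..<n} - E'))\<^sup>*\<^sup>* M M2 \<and> dual_rule2 ({..<n} - E') M2 M3 \<longrightarrow>
            (\<forall>i < length M3. known_deg ({..<n} - E') (M3 ! i) = 0 \<longrightarrow>
                             known_deg ({..<n} - E') (M2 ! i) = 0))
       \<and> (\<forall>M2. (dual_rule2 ({..<n} - E'))\<^sup>*\<^sup>* M M2 \<longrightarrow>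
            (\<forall>i < length M2. known_deg ({..<n} - E') (M2 ! i) = 0 \<longrightarrow>
                             known_deg ({..<n} - E') (M ! i) = 0))"
proof -
  have "set HX \<subseteq> orthogonal_rows n HZ"
    using HX_rows CSS by (auto simp: orthogonal_rows_def)
  then have rows: "set M \<subseteq> orthogonal_rows n HZ"
    using dual_steps_preserve_rows[OF row_xor_orthogonal_rows dual_run] by blast
  have "\<not> (\<exists>M'. dual_rule2 ({..<n} - E) M M')"
    using dual_exhausted by (auto simp: dual_step_def)
  from dual_rule2_disabled_after_primal_steps[OF rows this primal_run]
  have stuck: "\<not> (\<exists>M3. dual_rule2 ({..<n} - E') M M3)" .
  then have "M2 = M" if "(dual_rule2 ({..<n} - E'))\<^sup>*\<^sup>* M M2" for M2
    using that by (rule rtranclp_from_irreducible)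
  with stuck show ?thesis by blast
qed

end
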